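(* Let $A\in\mathbb{R}^{n\times d}$, $b\in\mathbb{R}^n$, and linearly independent $z\in\mathbb{R}^d$, $c\in\mathbb{S}^{d-1}$ be such that the shadow on $\operatorname{span}(c,z)$ is non-degenerate. Let $g,m>0$, $R>r>0$ and $k\in\mathbb{N}$ with $(10\log_2(R/r)+16)gm\le d$. Then \[ \big|T^{G(A,b,g)\cap M(A,z,2^kc+z,m)}\big|\le 2\sqrt{\frac{(128\log_2(R/r)+208)(5k+58)(\|z\|+d)}{gm}}+\big|\{I\in F(A,b):\|\pi_{c,z}(x_I)\|\notin[r,R]\}\big|+4k+2, \] where $T^S$ is taken with respect to the shadow path $P(A,b,z,2^kc+z)$.
   Context: For a basis $I$, $x_I=A_I^{-1}b_I$. $F(A,b)$: bases with $A_I$ invertible and $Ax_I\le b$. $G(A,b,g)=\{I\in F(A,b): a_j^\top x_I\le b_j-g\|x_I\|\ \forall j\notin I\}$. $M(A,y,y',m)$: bases $I$ such that some $w\in[y,y']$ has $w^\top A_I^{-1}\ge m$ componentwise. For linearly independent $y,y'$, $P(A,b,y,y')$: bases $I\in F(A,b)$ such that some $w\in[y,y']$ has $w^\top A_I^{-1}\ge0$. $\pi_{y,y'}$: orthogonal projection onto $\operatorname{span}(y,y')$; shadow polygon $\pi_{y,y'}(\{x:Ax\le b\})$. Non-degenerate: the preimage in $\{x:Ax\le b\}$ of each projected basic solution $\pi(x_I)$ on the path is the single point $x_I$. $I'$ is a neighbor of $I$ on the path if the shadow polygon has an edge between their projections. For a set $S$ of bases, $T^S$ is the set of $I\in S$ on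 the path having at least two neighbors in $S$. *)

theory Defs
  imports "HOL-Analysis.Analysis"
begin

text \<open>Matrix A in R^(n x d) is "real^'d^'n"; its row j is A $ j. Bases are subsets
I of the row index type 'n with card I = d.\<close>

definition bases :: "real^'d^'n \<Rightarrow> 'n set set" where
  "bases A = {I. card I = CARD('d)}"

definition invertible_sub :: "real^'d^'n \<Rightarrow> 'n set \<Rightarrow> bool" where
  "invertible_sub A I \<longleftrightarrow> card I = CARD('d) \<and> inj_on (\<lambda>j. A $ j) I
      \<and> independent ((\<lambda>j. A $ j) ` I)"

text \<open>Basic solution x_I = A_I^{-1} b_I: the unique x with a_j . x = b_j for j in I.\<close>
definition xI :: "real^'d^'n \<Rightarrow> real^'n \<Rightarrow> 'n set \<Rightarrow> real^'d" where
  "xI A b I = (THE x. \<forall>j\<in>I. A $ j \<bullet> x = b $ j)"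

definition feasible :: "real^'d^'n \<Rightarrow> real^'n \<Rightarrow> real^'d \<Rightarrow> bool" where
  "feasible A b x \<longleftrightarrow> (\<forall>j. A $ j \<bullet> x \<le> b $ j)"

definition Fset :: "real^'d^'n \<Rightarrow> real^'n \<Rightarrow> 'n set set" where
  "Fset A b = {I \<in> bases A. invertible_sub A I \<and> feasible A b (xI A b I)}"

definition Gset :: "real^'d^'n \<Rightarrow> real^'n \<Rightarrow> real \<Rightarrow> 'n set set" where
  "Gset A b g = {I \<in> Fset A b. \<forall>j. j \<notin> I \<longrightarrow>
      A $ j \<bullet> xI A b I \<le> b $ j - g * norm (xI A b I)}"

text \<open>w^T A_I^{-1} >= m componentwise: the (unique) coefficients lambda with
  lambda^T A_I = w^T, i.e. sum_(j in I) lambda_j a_j = w, are all >= m.\<close>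
definition dual_ge :: "real^'d^'n \<Rightarrow> 'n set \<Rightarrow> real^'d \<Rightarrow> real \<Rightarrow> bool" where
  "dual_ge A I w m \<longleftrightarrow> (\<exists>lam. (\<forall>j\<in>I. lam j \<ge> m) \<and> (\<Sum>j\<in>I. lam j *\<^sub>R A $ j) = w)"

definition Mset :: "real^'d^'n \<Rightarrow> real^'d \<Rightarrow> real^'d \<Rightarrow> real \<Rightarrow> 'n set set" where
  "Mset A y y' m = {I \<in> bases A. invertible_sub A I \<and>
      (\<exists>w\<in>closed_segment y y'. dual_ge A I w m)}"

definition Pset :: "real^'d^'n \<Rightarrow> real^'n \<Rightarrow> real^'d \<Rightarrow> real^'d \<Rightarrow> 'n set set" where
  "Pset A b y y' = {I \<in> Fset A b. \<exists>w\<in>closed_segment y y'. dual_ge A I w 0}"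

definition proj2 :: "real^'d \<Rightarrow> real^'d \<Rightarrow> real^'d \<Rightarrow> real^'d" where
  "proj2 y y' x = (THE p. p \<in> span {y, y'} \<and> (\<forall>v\<in>span {y, y'}. (x - p) \<bullet> v = 0))"

definition shadow :: "real^'d^'n \<Rightarrow> real^'n \<Rightarrow> real^'d \<Rightarrow> real^'d \<Rightarrow> (real^'d) set" where
  "shadow A b y y' = proj2 y y' ` {x. feasible A b x}"

definition nondegenerate :: "real^'d^'n \<Rightarrow> real^'n \<Rightarrow> real^'d \<Rightarrow> real^'d \<Rightarrow> bool" where
  "nondegenerate A b y y' \<longleftrightarrow> (\<forall>I\<in>Pset A b y y'.
      {x. feasible A b x \<and> proj2 y y' x = proj2 y y' (xI A b I)} = {xI A b I})"

definition neighbor :: "real^'d^'n \<Rightarrow> real^'n \<Rightarrow> real^'d \<Rightarrow> real^'d \<Rightarrow> 'n set \<Rightarrow> 'n set \<Rightarrow> bool" where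
  "neighbor A b y y' I I' \<longleftrightarrow> I \<in> Pset A b y y' \<and> I' \<in> Pset A b y y' \<and>
     proj2 y y' (xI A b I) \<noteq> proj2 y y' (xI A b I') \<and>
     closed_segment (proj2 y y' (xI A b I)) (proj2 y y' (xI A b I')) face_of shadow A b y y'"

definition Tset :: "real^'d^'n \<Rightarrow> real^'n \<Rightarrow> real^'d \<Rightarrow> real^'d \<Rightarrow> 'n set set \<Rightarrow> 'n set set" where
  "Tset A b y y' S = {I \<in> S \<inter> Pset A b y y'. 2 \<le> card {I' \<in> S. neighbor A b y y' I I'}}"

end

(*
  If I is in M, some w = z + tau c on the segment, 0 <= tau <= 2^k, satisfies
  w = sum_{j in I} lambda_j a_j with all lambda_j >= m; if J is in G and I ~= J, some row of I
  is not in J and has slack at least g |x_J| at x_J, so  w . (x_I - x_J) >= m g |x_J| >= m g |pi(x_J)|.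
  Writing C = c . x, Z = z . x and P = |pi(x)|, this pairwise inequality forces the parameters tau
  to be distinct; along the bases sorted by tau, the increments of C and -Z normalised by P are
  positive and telescope, through the potential sgn u * ln(1 + |u| / s), to O(log(R / r)) whenever
  P stays in [r, R].  Steps along which 1 + tau at most doubles are then counted by Cauchy-Schwarz
  against the logarithmic growth of 1 + tau, the remaining ones by that growth alone.

  The argument bounds all bases of G and M whose projection has norm in [r, R], not only those
  in T.
*)

theory Submission
  imports Defs
begin

lemma span_rows_eq_UNIV:
  fixes A :: "real^'d^'n"
  assumes "invertible_sub A I"
  shows "span ((\<lambda>j. A $ j) ` I) = UNIV"
proof -
  have "independent ((\<lambda>j. A $ j) ` I)" "card ((\<lambda>j. A $ j) ` I) = dim (UNIV :: (real^'d) set)"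
    using assms by (auto simp: invertible_sub_def card_image)
  then show ?thesis
    using card_eq_dim[of "(\<lambda>j. A $ j) ` I" UNIV] by (auto simp: independent_imp_finite)
qed

lemma eq_0_if_orthogonal_rows:
  fixes A :: "real^'d^'n"
  assumes "invertible_sub A I" and "\<And>j. j \<in> I \<Longrightarrow> A $ j \<bullet> y = 0"
  shows "y = 0"
proof -
  have "orthogonal y v" if "v \<in> span ((\<lambda>j. A $ j) ` I)" for v
    using that by (rule orthogonal_to_span) (auto simp: orthogonal_def inner_commute[of y] assms(2))
  then have "orthogonal y y"
    using span_rows_eq_UNIV[OF assms(1)] by auto
  then show ?thesis by (simp add: orthogonal_def)
qed

lemma xI_solves:
  fixes A :: "real^'d^'n"
  assumes "invertible_sub A I" and "j \<in> I"
  shows "A $ j \<bullet> xI A b I = b $ j"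
proof -
  obtain \<sigma> where \<sigma>: "bij_betw \<sigma> (UNIV :: 'd set) I"
    using assms(1) finite_same_card_bij[of "UNIV :: 'd set" I] by (auto simp: invertible_sub_def)
  then have \<sigma>_surj: "\<exists>i. \<sigma> i = j" if "j \<in> I" for j
    using that by (metis bij_betw_inv_into_right)
  define L where "L x = (\<chi> i. A $ \<sigma> i \<bullet> x)" for x :: "real^'d"
  have "linear L"
    unfolding L_def by (auto intro!: linearI simp: vec_eq_iff inner_add_right)
  moreover have "inj L"
    unfolding linear_inj_iff_eq_0[OF \<open>linear L\<close>]
  proof (intro allI impI)
    fix x assume "L x = 0"
    then have "A $ \<sigma> i \<bullet> x = 0" for i by (auto simp: L_def vec_eq_iff)
    then show "x = 0"
      using \<sigma>_surj by (intro eq_0_if_orthogonal_rows[OF assms(1)]) blast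
  qed
  ultimately obtain x where "L x = (\<chi> i. b $ \<sigma> i)"
    by (metis linear_injective_imp_surjective surjD)
  then have sol: "\<forall>j\<in>I. A $ j \<bullet> x = b $ j"
    using \<sigma>_surj by (auto simp: L_def vec_eq_iff)
  have "xI A b I = x"
    unfolding xI_def
  proof (rule the_equality)
    show "\<forall>j\<in>I. A $ j \<bullet> x = b $ j" by (fact sol)
    fix x' assume "\<forall>j\<in>I. A $ j \<bullet> x' = b $ j"
    then show "x' = x"
      using sol eq_0_if_orthogonal_rows[OF assms(1), of "x' - x"] by (simp add: inner_diff_right)
  qed
  then show ?thesis using sol assms(2) by simp
qed

lemma proj2_in_span_orthogonal:
  fixes y y' x :: "real^'d"
  shows "proj2 y y' x \<in> span {y, y'} \<and> (\<forall>v\<in>span {y, y'}. (x - proj2 y y' x) \<bullet> v = 0)"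
proof -
  obtain p q where p: "p \<in> span {y, y'}" and q: "\<And>v. v \<in> span {y, y'} \<Longrightarrow> orthogonal q v"
    and "x = p + q"
    using orthogonal_subspace_decomp_exists[of "{y, y'}" x] by metis
  then have P: "p \<in> span {y, y'} \<and> (\<forall>v\<in>span {y, y'}. (x - p) \<bullet> v = 0)"
    by (simp add: orthogonal_def inner_commute)
  have "p' = p" if P': "p' \<in> span {y, y'} \<and> (\<forall>v\<in>span {y, y'}. (x - p') \<bullet> v = 0)" for p'
  proof -
    have "p' - p \<in> span {y, y'}" using P P' by (simp add: span_diff)
    then have "(x - p) \<bullet> (p' - p) = 0" "(x - p') \<bullet> (p' - p) = 0"
      using P P' by blast+
    then have "((x - p) - (x - p')) \<bullet> (p' - p) = 0"
      by (simp only: inner_diff_left)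
    then show ?thesis by simp
  qed
  then have "proj2 y y' x = p"
    unfolding proj2_def using P by (rule the_equality[rotated]) blast
  then show ?thesis using P by simp
qed

lemma inner_proj2:
  fixes y y' x v :: "real^'d"
  assumes "v \<in> span {y, y'}"
  shows "v \<bullet> proj2 y y' x = v \<bullet> x"
proof -
  have "(x - proj2 y y' x) \<bullet> v = 0"
    using assms proj2_in_span_orthogonal[of y y' x] by blast
  then show ?thesis by (simp add: inner_diff_left inner_commute[of v])
qed

lemma abs_inner_le_norm_proj2:
  fixes y y' x v :: "real^'d"
  assumes "v \<in> span {y, y'}"
  shows "\<bar>v \<bullet> x\<bar> \<le> norm v * norm (proj2 y y' x)"
  using Cauchy_Schwarz_ineq2[of v "proj2 y y' x"] by (simp add: inner_proj2[OF assms])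

lemma norm_proj2_le:
  fixes y y' x :: "real^'d"
  shows "norm (proj2 y y' x) \<le> norm x"
proof -
  let ?p = "proj2 y y' x"
  have "(x - ?p) \<bullet> ?p = 0"
    using proj2_in_span_orthogonal[of y y' x] by blast
  then have "orthogonal ?p (x - ?p)"
    by (simp add: orthogonal_def inner_commute[of ?p])
  then have "norm ?p ^ 2 \<le> norm x ^ 2"
    using norm_add_Pythagorean[of ?p "x - ?p"] by simp
  then show ?thesis
    using norm_ge_zero by (rule power2_le_imp_le)
qed

lemma dual_gap_le_inner_diff:
  fixes A :: "real^'d^'n"
  assumes I: "invertible_sub A I" and w: "dual_ge A I w m" and "0 \<le> m"
    and J: "J \<in> Gset A b g" and "0 \<le> g" and "I \<noteq> J"
  shows "m * g * norm (xI A b J) \<le> w \<bullet> (xI A b I - xI A b J)"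
proof -
  let ?slack = "\<lambda>j. b $ j - A $ j \<bullet> xI A b J"
  obtain \<alpha> where \<alpha>_ge: "\<And>j. j \<in> I \<Longrightarrow> m \<le> \<alpha> j" and w_eq: "(\<Sum>j\<in>I. \<alpha> j *\<^sub>R A $ j) = w"
    using w unfolding dual_ge_def by blast
  have slack_ge: "0 \<le> ?slack j" for j
    using J by (simp add: Gset_def Fset_def feasible_def)
  have gap: "g * norm (xI A b J) \<le> ?slack j" if "j \<notin> J" for j
    using J that by (auto simp: Gset_def algebra_simps)
  have "card J = card I"
    using I J by (simp add: Gset_def Fset_def invertible_sub_def)
  then obtain i where i: "i \<in> I" "i \<notin> J"
    using \<open>I \<noteq> J\<close> by (metis card_subset_eq finite subsetI)
  have "w \<bullet> (xI A b I - xI A b J) = (\<Sum>j\<in>I. \<alpha> j * (A $ j \<bullet> xI A b I - A $ j \<bullet> xI A b J))"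
    unfolding w_eq[symmetric]
    by (simp add: inner_sum_left inner_diff_right right_diff_distrib sum_subtractf)
  also have "\<dots> = (\<Sum>j\<in>I. \<alpha> j * ?slack j)"
    using xI_solves[OF I] by (intro sum.cong) auto
  also have "\<dots> \<ge> \<alpha> i * ?slack i"
    using \<alpha>_ge slack_ge \<open>0 \<le> m\<close> i(1)
    by (intro member_le_sum) (auto intro!: mult_nonneg_nonneg intro: order_trans)
  also have "\<alpha> i * ?slack i \<ge> m * (g * norm (xI A b J))"
    using \<alpha>_ge[OF i(1)] gap[OF i(2)] \<open>0 \<le> m\<close> \<open>0 \<le> g\<close> by (intro mult_mono) auto
  finally show ?thesis by (simp add: mult.assoc)
qed

lemma card_le_sqrt_if_mult_ge:
  fixes X Y :: "'a \<Rightarrow> real"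
  assumes "finite E" and "0 < \<kappa>"
    and X: "\<And>e. e \<in> E \<Longrightarrow> 0 \<le> X e" and Y: "\<And>e. e \<in> E \<Longrightarrow> 0 \<le> Y e"
    and XY: "\<And>e. e \<in> E \<Longrightarrow> \<kappa> \<le> X e * Y e"
  shows "real (card E) \<le> sqrt (sum X E * sum Y E / \<kappa>)"
proof -
  have "real (card E) * sqrt \<kappa> = (\<Sum>e\<in>E. sqrt \<kappa>)"
    by simp
  also have "\<dots> \<le> (\<Sum>e\<in>E. \<bar>sqrt (X e)\<bar> * \<bar>sqrt (Y e)\<bar>)"
    using X Y XY by (intro sum_mono) (simp add: real_sqrt_mult[symmetric])
  also have "\<dots> \<le> L2_set (\<lambda>e. sqrt (X e)) E * L2_set (\<lambda>e. sqrt (Y e)) E"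
    by (rule L2_set_mult_ineq)
  also have "\<dots> = sqrt (sum X E * sum Y E)"
    using X Y by (simp add: L2_set_def real_sqrt_mult)
  finally show ?thesis
    using \<open>0 < \<kappa>\<close> by (simp add: real_sqrt_divide pos_le_divide_eq)
qed

lemma diff_div_le_ln_diff:
  fixes x y :: real
  assumes "0 < x" and "x \<le> y"
  shows "(y - x) / y \<le> ln y - ln x"
  using ln_le_minus_one[of "x / y"] assms by (simp add: ln_div diff_divide_distrib)

lemma diff_div_le_two_ln_diff:
  fixes x y :: real
  assumes "0 < x" and "x \<le> y" and "y \<le> 2 * x"
  shows "(y - x) / x \<le> 2 * (ln y - ln x)"
proof -
  have "(y - x) / x = (y / x) * ((y - x) / y)"
    using assms by (simp add: field_simps)
  also have "\<dots> \<le> 2 * ((y - x) / y)"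
    using assms by (intro mult_right_mono) (simp_all add: field_simps)
  also have "\<dots> \<le> 2 * (ln y - ln x)"
    using diff_div_le_ln_diff[OF assms(1,2)] by (rule mult_left_mono) simp
  finally show ?thesis .
qed

lemma sum_telescope_subset_le:
  fixes f :: "nat \<Rightarrow> real"
  assumes "\<And>i. i < N \<Longrightarrow> f i \<le> f (Suc i)" and "E \<subseteq> {..<N}"
  shows "(\<Sum>i\<in>E. f (Suc i) - f i) \<le> f N - f 0"
proof -
  have "(\<Sum>i\<in>E. f (Suc i) - f i) \<le> (\<Sum>i<N. f (Suc i) - f i)"
    using assms by (intro sum_mono2) auto
  also have "\<dots> = f N - f 0"
    by (rule sum_lessThan_telescope)
  finally show ?thesis .
qed

text \<open>An antiderivative of \<open>1 / (\<bar>u\<bar> + s)\<close>; its increments dominate the normalised increments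
  of the coordinates \<open>C\<close> and \<open>-Z\<close> below.\<close>

definition signed_log :: "real \<Rightarrow> real \<Rightarrow> real" where
  "signed_log s u = sgn u * ln ((\<bar>u\<bar> + s) / s)"

lemma signed_log_eq:
  assumes "0 < s"
  shows "signed_log s u = (if 0 \<le> u then ln (u + s) - ln s else ln s - ln (s - u))"
  using assms by (auto simp: signed_log_def ln_div sgn_if)

lemma signed_log_diff_ge:
  assumes "0 < s" and "a \<le> b"
  shows "(b - a) / (max \<bar>a\<bar> \<bar>b\<bar> + s) \<le> signed_log s b - signed_log s a"
proof (cases "0 \<le> a \<or> b \<le> 0")
  case True
  then show ?thesis
    using assms diff_div_le_ln_diff[of "a + s" "b + s"] diff_div_le_ln_diff[of "s - b" "s - a"]
    by (auto simp: signed_log_eq max_def)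
next
  case False
  have "(b - a) / (max \<bar>a\<bar> \<bar>b\<bar> + s) = b / (max \<bar>a\<bar> \<bar>b\<bar> + s) + (- a) / (max \<bar>a\<bar> \<bar>b\<bar> + s)"
    by (simp add: diff_divide_distrib)
  also have "\<dots> \<le> b / (b + s) + (- a) / (s - a)"
    using False assms by (intro add_mono divide_left_mono) auto
  also have "\<dots> \<le> (ln (b + s) - ln s) + (ln (s - a) - ln s)"
    using False assms diff_div_le_ln_diff[of s "b + s"] diff_div_le_ln_diff[of s "s - a"]
    by (intro add_mono) auto
  finally show ?thesis
    using False assms by (simp add: signed_log_eq)
qed

lemma abs_signed_log_le:
  assumes "0 < s" and "\<bar>u\<bar> \<le> B"
  shows "\<bar>signed_log s u\<bar> \<le> ln ((B + s) / s)"
  using assms by (auto simp: signed_log_def abs_mult sgn_if divide_right_mono)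

lemma sum_increments_div_le:
  fixes u P :: "nat \<Rightarrow> real"
  assumes "0 < r" and "0 < a"
    and bounds: "\<And>i. i \<le> N \<Longrightarrow> r \<le> P i \<and> P i \<le> R \<and> \<bar>u i\<bar> \<le> a * P i"
    and mono: "\<And>i. i < N \<Longrightarrow> u i \<le> u (Suc i)"
  shows "(\<Sum>i<N. (u (Suc i) - u i) / (P i + P (Suc i))) \<le> 2 * a * ln ((R + r) / r)"
proof -
  define \<phi> where "\<phi> i = a * signed_log (a * r) (u i)" for i
  have "(u (Suc i) - u i) / (P i + P (Suc i)) \<le> \<phi> (Suc i) - \<phi> i" if "i < N" for i
  proof -
    have "a * r \<le> a * P i" "a * r \<le> a * P (Suc i)"
      using bounds[of i] bounds[of "Suc i"] that \<open>0 < a\<close> by simp_all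
    then have le: "max \<bar>u i\<bar> \<bar>u (Suc i)\<bar> + a * r \<le> a * (P i + P (Suc i))"
      using bounds[of i] bounds[of "Suc i"] that by (auto simp: max_def distrib_left)
    have pos: "0 < max \<bar>u i\<bar> \<bar>u (Suc i)\<bar> + a * r"
      using assms(1,2) by (simp add: add_nonneg_pos le_max_iff_disj)
    have "(u (Suc i) - u i) / (a * (P i + P (Suc i)))
        \<le> (u (Suc i) - u i) / (max \<bar>u i\<bar> \<bar>u (Suc i)\<bar> + a * r)"
      using mono[OF that] pos le assms(1,2) bounds[of i] bounds[of "Suc i"] that
      by (intro divide_left_mono mult_pos_pos) auto
    also have "\<dots> \<le> signed_log (a * r) (u (Suc i)) - signed_log (a * r) (u i)"
      using mono[OF that] assms(1,2) by (intro signed_log_diff_ge) auto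
    finally have "a * ((u (Suc i) - u i) / (a * (P i + P (Suc i))))
        \<le> a * (signed_log (a * r) (u (Suc i)) - signed_log (a * r) (u i))"
      using \<open>0 < a\<close> by (intro mult_left_mono) auto
    moreover have "a * ((u (Suc i) - u i) / (a * (P i + P (Suc i)))) = (u (Suc i) - u i) / (P i + P (Suc i))"
      using \<open>0 < a\<close> by simp
    ultimately show ?thesis
      unfolding \<phi>_def by (metis right_diff_distrib)
  qed
  then have "(\<Sum>i<N. (u (Suc i) - u i) / (P i + P (Suc i))) \<le> (\<Sum>i<N. \<phi> (Suc i) - \<phi> i)"
    by (intro sum_mono) auto
  also have "\<dots> = \<phi> N - \<phi> 0"
    by (rule sum_lessThan_telescope)
  also have "\<dots> \<le> 2 * a * ln ((R + r) / r)"
  proof -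
    have "\<bar>\<phi> i\<bar> \<le> a * ln ((R + r) / r)" if "i \<le> N" for i
    proof -
      have "a * P i \<le> a * R"
        using bounds[OF that] \<open>0 < a\<close> by simp
      then have "\<bar>u i\<bar> \<le> a * R"
        using bounds[OF that] by linarith
      then have "\<bar>signed_log (a * r) (u i)\<bar> \<le> ln ((a * R + a * r) / (a * r))"
        using assms(1,2) by (intro abs_signed_log_le) auto
      then show ?thesis
        using \<open>0 < a\<close> by (simp add: \<phi>_def abs_mult distrib_left[symmetric])
    qed
    from this[of N] this[of 0] show ?thesis by simp
  qed
  finally show ?thesis .
qed

text \<open>Bases sorted by their dual parameter \<open>t\<close>, with \<open>C = c \<bullet> x\<close>, \<open>Z = z \<bullet> x\<close> and
  \<open>P = norm (proj2 c z x)\<close>; \<open>gap_fwd\<close> and \<open>gap_bwd\<close> are the pairwise inequality of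
  \<open>dual_gap_le_inner_diff\<close> for consecutive bases.\<close>

locale gap_chain =
  fixes N k :: nat and t C Z P :: "nat \<Rightarrow> real" and r R \<kappa> \<zeta> :: real
  assumes r_pos: "0 < r" and \<kappa>_pos: "0 < \<kappa>" and \<zeta>_pos: "0 < \<zeta>"
    and t_range: "\<And>i. i \<le> N \<Longrightarrow> 0 \<le> t i \<and> t i \<le> 2 ^ k"
    and P_range: "\<And>i. i \<le> N \<Longrightarrow> r \<le> P i \<and> P i \<le> R"
    and C_le: "\<And>i. i \<le> N \<Longrightarrow> \<bar>C i\<bar> \<le> P i"
    and Z_le: "\<And>i. i \<le> N \<Longrightarrow> \<bar>Z i\<bar> \<le> \<zeta> * P i"
    and t_less: "\<And>i. i < N \<Longrightarrow> t i < t (Suc i)"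
    and gap_fwd: "\<And>i. i < N \<Longrightarrow> \<kappa> * P (Suc i) \<le> Z i - Z (Suc i) + t i * (C i - C (Suc i))"
    and gap_bwd: "\<And>i. i < N \<Longrightarrow> \<kappa> * P i \<le> Z (Suc i) - Z i + t (Suc i) * (C (Suc i) - C i)"
begin

lemma P_pos: "i \<le> N \<Longrightarrow> 0 < P i"
  using P_range r_pos by (meson less_le_trans)

lemma kappa_mult_le_increments:
  assumes "i < N"
  shows "\<kappa> * (P i + P (Suc i)) \<le> (t (Suc i) - t i) * (C (Suc i) - C i)"
proof -
  have "(t (Suc i) - t i) * (C (Suc i) - C i) = t (Suc i) * (C (Suc i) - C i) + t i * (C i - C (Suc i))"
    by (simp add: algebra_simps)
  then show ?thesis
    using gap_fwd[OF assms] gap_bwd[OF assms] by (simp add: distrib_left)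
qed

lemma C_less:
  assumes "i < N"
  shows "C i < C (Suc i)"
proof -
  have "0 < \<kappa> * (P i + P (Suc i))"
    using \<kappa>_pos P_pos[of i] P_pos[of "Suc i"] assms by simp
  then have "0 < (t (Suc i) - t i) * (C (Suc i) - C i)"
    using kappa_mult_le_increments[OF assms] by linarith
  then show ?thesis
    using t_less[OF assms] by (simp add: zero_less_mult_iff)
qed

lemma t_mult_C_incr_le_Z_decr:
  assumes "i < N"
  shows "t i * (C (Suc i) - C i) \<le> Z i - Z (Suc i)"
proof -
  have "0 \<le> \<kappa> * P (Suc i)"
    using \<kappa>_pos P_pos[of "Suc i"] assms by simp
  moreover have "t i * (C i - C (Suc i)) = - (t i * (C (Suc i) - C i))"
    by (simp add: algebra_simps)
  ultimately show ?thesis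
    using gap_fwd[OF assms] by linarith
qed

definition weight :: "nat \<Rightarrow> real" where
  "weight i = ((C (Suc i) - C i) + (Z i - Z (Suc i))) / (P i + P (Suc i))"

lemma weight_nonneg:
  assumes "i < N"
  shows "0 \<le> weight i"
proof -
  have "0 \<le> t i * (C (Suc i) - C i)"
    using t_range[of i] C_less[OF assms] assms by simp
  then have "0 \<le> (C (Suc i) - C i) + (Z i - Z (Suc i))"
    using C_less[OF assms] t_mult_C_incr_le_Z_decr[OF assms] by linarith
  then show ?thesis
    unfolding weight_def using P_pos[of i] P_pos[of "Suc i"] assms by simp
qed

lemma sum_weight_le: "(\<Sum>i<N. weight i) \<le> 2 * (1 + \<zeta>) * ln ((R + r) / r)"
proof -
  have "(\<Sum>i<N. (C (Suc i) - C i) / (P i + P (Suc i))) \<le> 2 * 1 * ln ((R + r) / r)"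
    using r_pos P_range C_le C_less by (intro sum_increments_div_le) (auto simp: less_imp_le)
  moreover have "(\<Sum>i<N. (- Z (Suc i) - - Z i) / (P i + P (Suc i))) \<le> 2 * \<zeta> * ln ((R + r) / r)"
  proof (intro sum_increments_div_le)
    show "- Z i \<le> - Z (Suc i)" if "i < N" for i
    proof -
      have "0 \<le> t i * (C (Suc i) - C i)"
        using t_range[of i] C_less[OF that] that by simp
      then show ?thesis
        using t_mult_C_incr_le_Z_decr[OF that] by linarith
    qed
  qed (use r_pos \<zeta>_pos P_range Z_le in auto)
  moreover have "(\<Sum>i<N. weight i) = (\<Sum>i<N. (C (Suc i) - C i) / (P i + P (Suc i)))
      + (\<Sum>i<N. (- Z (Suc i) - - Z i) / (P i + P (Suc i)))"
    by (simp add: weight_def add_divide_distrib sum.distrib)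
  moreover have "2 * (1 + \<zeta>) * ln ((R + r) / r) = 2 * 1 * ln ((R + r) / r) + 2 * \<zeta> * ln ((R + r) / r)"
    by (simp add: algebra_simps)
  ultimately show ?thesis
    by linarith
qed

lemma kappa_le_weight_mult:
  assumes "i < N"
  shows "\<kappa> * (1 + t i) \<le> weight i * (t (Suc i) - t i)"
proof -
  have "\<kappa> * (1 + t i) * (P i + P (Suc i))
      = \<kappa> * (P i + P (Suc i)) + t i * (\<kappa> * (P i + P (Suc i)))"
    by (simp add: algebra_simps)
  also have "\<dots> \<le> (t (Suc i) - t i) * (C (Suc i) - C i) + t i * ((t (Suc i) - t i) * (C (Suc i) - C i))"
    using kappa_mult_le_increments[OF assms] t_range[of i] assms by (intro add_mono mult_left_mono) auto
  also have "\<dots> = (t (Suc i) - t i) * ((C (Suc i) - C i) + t i * (C (Suc i) - C i))"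
    by (simp add: algebra_simps)
  also have "\<dots> \<le> (t (Suc i) - t i) * ((C (Suc i) - C i) + (Z i - Z (Suc i)))"
    using t_mult_C_incr_le_Z_decr[OF assms] t_less[OF assms] by (intro mult_left_mono) auto
  finally show ?thesis
    using P_pos[of i] P_pos[of "Suc i"] assms
    by (simp add: weight_def pos_le_divide_eq mult.commute mult.left_commute)
qed

lemma ln_growth_le: "ln (1 + t N) - ln (1 + t 0) \<le> (real k + 1) * ln 2"
proof -
  have "(1::real) \<le> 2 ^ k"
    by simp
  then have "1 + t N \<le> 2 * 2 ^ k"
    using t_range[of N] by linarith
  then have "ln (1 + t N) \<le> ln (2 * 2 ^ k)"
    using t_range[of N] by simp
  also have "\<dots> = (real k + 1) * ln 2"
    by (simp add: ln_mult ln_realpow algebra_simps)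
  finally have "ln (1 + t N) \<le> (real k + 1) * ln 2" .
  moreover have "0 \<le> ln (1 + t 0)"
    using t_range[of 0] by simp
  ultimately show ?thesis
    by linarith
qed

lemma ln_step_mono: "i < N \<Longrightarrow> ln (1 + t i) \<le> ln (1 + t (Suc i))"
  using t_range[of i] t_less[of i] by simp

lemma sum_ln_steps_le:
  assumes "E \<subseteq> {..<N}"
  shows "(\<Sum>i\<in>E. ln (1 + t (Suc i)) - ln (1 + t i)) \<le> (real k + 1) * ln 2"
  using sum_telescope_subset_le[of N "\<lambda>i. ln (1 + t i)" E, OF ln_step_mono assms] ln_growth_le
  by linarith

lemma kappa_le_weight_mult_ln_step:
  assumes "i < N" and "1 + t (Suc i) \<le> 2 * (1 + t i)"
  shows "\<kappa> \<le> weight i * (2 * (ln (1 + t (Suc i)) - ln (1 + t i)))"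
proof -
  have pos: "0 < 1 + t i"
    using t_range[of i] assms(1) by simp
  have "\<kappa> \<le> weight i * ((t (Suc i) - t i) / (1 + t i))"
    using kappa_le_weight_mult[OF assms(1)] pos by (simp add: pos_le_divide_eq mult.commute)
  also have "\<dots> \<le> weight i * (2 * (ln (1 + t (Suc i)) - ln (1 + t i)))"
    using diff_div_le_two_ln_diff[of "1 + t i" "1 + t (Suc i)"] pos assms t_less[OF assms(1)]
      weight_nonneg[OF assms(1)]
    by (intro mult_left_mono) simp_all
  finally show ?thesis .
qed

lemma card_small_steps_le:
  "real (card {i. i < N \<and> 1 + t (Suc i) \<le> 2 * (1 + t i)})
    \<le> sqrt (4 * (1 + \<zeta>) * ln ((R + r) / r) * (real k + 1) / \<kappa>)"
proof -
  define E where "E = {i. i < N \<and> 1 + t (Suc i) \<le> 2 * (1 + t i)}"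
  define Y where "Y i = 2 * (ln (1 + t (Suc i)) - ln (1 + t i))" for i
  have E_sub: "E \<subseteq> {..<N}"
    by (auto simp: E_def)
  have "real (card E) \<le> sqrt (sum weight E * sum Y E / \<kappa>)"
  proof (rule card_le_sqrt_if_mult_ge)
    show "finite E"
      using E_sub by (rule finite_subset) simp
    show "0 \<le> weight i" "0 \<le> Y i" "\<kappa> \<le> weight i * Y i" if "i \<in> E" for i
      using that weight_nonneg ln_step_mono kappa_le_weight_mult_ln_step by (auto simp: E_def Y_def)
  qed (fact \<kappa>_pos)
  also have "\<dots> \<le> sqrt (4 * (1 + \<zeta>) * ln ((R + r) / r) * (real k + 1) / \<kappa>)"
  proof -
    have "sum weight E \<le> (\<Sum>i<N. weight i)"
      using E_sub weight_nonneg by (intro sum_mono2) auto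
    then have weight_le: "sum weight E \<le> 2 * (1 + \<zeta>) * ln ((R + r) / r)"
      using sum_weight_le by linarith
    have "sum Y E = 2 * (\<Sum>i\<in>E. ln (1 + t (Suc i)) - ln (1 + t i))"
      by (simp add: Y_def sum_distrib_left)
    also have "\<dots> \<le> 2 * ((real k + 1) * ln 2)"
      using sum_ln_steps_le[OF E_sub] by simp
    also have "\<dots> \<le> 2 * ((real k + 1) * 1)"
      using ln_2_less_1 by (intro mult_left_mono) auto
    finally have Y_le: "sum Y E \<le> 2 * (real k + 1)"
      by simp
    have "0 \<le> sum Y E"
      using E_sub ln_step_mono by (intro sum_nonneg) (auto simp: Y_def)
    then have "sum weight E * sum Y E \<le> (2 * (1 + \<zeta>) * ln ((R + r) / r)) * (2 * (real k + 1))"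
      using weight_le Y_le r_pos \<zeta>_pos P_range[of 0] by (intro mult_mono) auto
    also have "\<dots> = 4 * (1 + \<zeta>) * ln ((R + r) / r) * (real k + 1)"
      by (simp add: algebra_simps)
    finally show ?thesis
      using \<kappa>_pos by (intro real_sqrt_le_mono divide_right_mono) auto
  qed
  finally show ?thesis
    by (simp add: E_def)
qed

lemma card_big_steps_le: "card {i. i < N \<and> 2 * (1 + t i) < 1 + t (Suc i)} \<le> k + 1"
proof -
  define E where "E = {i. i < N \<and> 2 * (1 + t i) < 1 + t (Suc i)}"
  have E_sub: "E \<subseteq> {..<N}"
    by (auto simp: E_def)
  have "real (card E) * ln 2 = (\<Sum>i\<in>E. ln 2)"
    by simp
  also have "\<dots> \<le> (\<Sum>i\<in>E. ln (1 + t (Suc i)) - ln (1 + t i))"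
  proof (rule sum_mono)
    fix i assume "i \<in> E"
    then have "2 * (1 + t i) < 1 + t (Suc i)" "0 \<le> t i"
      using t_range[of i] by (auto simp: E_def)
    then have "ln (2 * (1 + t i)) \<le> ln (1 + t (Suc i))"
      by (subst ln_le_cancel_iff) auto
    moreover have "ln (2 * (1 + t i)) = ln 2 + ln (1 + t i)"
      using \<open>0 \<le> t i\<close> by (intro ln_mult_pos) auto
    ultimately show "ln 2 \<le> ln (1 + t (Suc i)) - ln (1 + t i)"
      by linarith
  qed
  also have "\<dots> \<le> (real k + 1) * ln 2"
    using sum_ln_steps_le[OF E_sub] .
  finally show ?thesis
    by (simp add: E_def)
qed

lemma chain_length_le: "real N \<le> real k + 1 + sqrt (4 * (1 + \<zeta>) * ln ((R + r) / r) * (real k + 1) / \<kappa>)"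
proof -
  have "{..<N} = {i. i < N \<and> 1 + t (Suc i) \<le> 2 * (1 + t i)} \<union> {i. i < N \<and> 2 * (1 + t i) < 1 + t (Suc i)}"
    by auto
  then have "card {..<N}
      \<le> card {i. i < N \<and> 1 + t (Suc i) \<le> 2 * (1 + t i)} + card {i. i < N \<and> 2 * (1 + t i) < 1 + t (Suc i)}"
    by (simp only: card_Un_le)
  then show ?thesis
    using card_small_steps_le card_big_steps_le by simp
qed

end

lemma sorted_enumeration_exists:
  fixes t :: "'a \<Rightarrow> 'b::linorder"
  assumes "finite S" and "inj_on t S"
  obtains e where "\<And>i. i < card S \<Longrightarrow> e i \<in> S"
    and "\<And>i. Suc i < card S \<Longrightarrow> t (e i) < t (e (Suc i))"
proof -
  define xs where "xs = sorted_list_of_set (t ` S)"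
  have len: "length xs = card S" and set_xs: "set xs = t ` S" and sorted: "sorted_wrt (<) xs"
    using assms by (simp_all add: xs_def card_image)
  define e where "e i = inv_into S t (xs ! i)" for i
  have e: "e i \<in> S \<and> t (e i) = xs ! i" if "i < card S" for i
    using nth_mem[of i xs] len set_xs that by (auto simp: e_def inv_into_into f_inv_into_f)
  show ?thesis
  proof (rule that)
    show "e i \<in> S" if "i < card S" for i
      using e that by blast
    show "t (e i) < t (e (Suc i))" if "Suc i < card S" for i
      using e[of i] e[of "Suc i"] sorted_wrt_nth_less[OF sorted, of i "Suc i"] len that by simp
  qed
qed

lemma inj_on_if_pairwise_gaps:
  fixes t C Z P :: "'a \<Rightarrow> real"
  assumes pos: "\<And>I. I \<in> S \<Longrightarrow> 0 < \<kappa> * P I"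
    and gap: "\<And>I J. I \<in> S \<Longrightarrow> J \<in> S \<Longrightarrow> I \<noteq> J \<Longrightarrow> \<kappa> * P J \<le> Z I - Z J + t I * (C I - C J)"
  shows "inj_on t S"
proof (rule inj_onI, rule ccontr)
  fix I J assume "I \<in> S" "J \<in> S" "t I = t J" "I \<noteq> J"
  then have "\<kappa> * P J \<le> Z I - Z J + t I * (C I - C J)" "\<kappa> * P I \<le> Z J - Z I + t J * (C J - C I)"
    using gap by blast+
  moreover have "t I * (C I - C J) + t J * (C J - C I) = 0"
    using \<open>t I = t J\<close> by (simp add: algebra_simps)
  ultimately show False
    using pos[OF \<open>I \<in> S\<close>] pos[OF \<open>J \<in> S\<close>] by linarith
qed

lemma card_le_if_pairwise_gaps:
  fixes S :: "'a set" and t C Z P :: "'a \<Rightarrow> real" and k :: nat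
  assumes "finite S" and "0 < r" and "r \<le> R" and "0 < \<kappa>" and "0 < \<zeta>"
    and range: "\<And>I. I \<in> S \<Longrightarrow> 0 \<le> t I \<and> t I \<le> 2 ^ k \<and> r \<le> P I \<and> P I \<le> R
      \<and> \<bar>C I\<bar> \<le> P I \<and> \<bar>Z I\<bar> \<le> \<zeta> * P I"
    and gap: "\<And>I J. I \<in> S \<Longrightarrow> J \<in> S \<Longrightarrow> I \<noteq> J \<Longrightarrow> \<kappa> * P J \<le> Z I - Z J + t I * (C I - C J)"
  shows "real (card S) \<le> real k + 2 + sqrt (4 * (1 + \<zeta>) * ln ((R + r) / r) * (real k + 1) / \<kappa>)"
proof (cases "S = {}")
  case True
  then show ?thesis
    using assms(2-5) by simp
next
  case False
  then have "0 < card S"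
    using \<open>finite S\<close> by (simp add: card_gt_0_iff)
  have "inj_on t S"
    using range \<open>0 < r\<close> \<open>0 < \<kappa>\<close> by (intro inj_on_if_pairwise_gaps[OF _ gap]) force
  then obtain e where e_in: "\<And>i. i < card S \<Longrightarrow> e i \<in> S"
    and e_less: "\<And>i. Suc i < card S \<Longrightarrow> t (e i) < t (e (Suc i))"
    using sorted_enumeration_exists[OF \<open>finite S\<close>] by blast
  interpret chain: gap_chain "card S - 1" k "t \<circ> e" "C \<circ> e" "Z \<circ> e" "P \<circ> e" r R \<kappa> \<zeta>
  proof
    fix i
    assume "i \<le> card S - 1"
    with range[OF e_in[of i]] \<open>0 < card S\<close> show "0 \<le> (t \<circ> e) i \<and> (t \<circ> e) i \<le> 2 ^ k"
      "r \<le> (P \<circ> e) i \<and> (P \<circ> e) i \<le> R" "\<bar>(C \<circ> e) i\<bar> \<le> (P \<circ> e) i"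
      "\<bar>(Z \<circ> e) i\<bar> \<le> \<zeta> * (P \<circ> e) i"
      by auto
  next
    fix i
    assume "i < card S - 1"
    then have i: "i < card S" "Suc i < card S"
      by auto
    then have "e i \<noteq> e (Suc i)"
      using e_less[of i] by auto
    then show "(t \<circ> e) i < (t \<circ> e) (Suc i)"
      "\<kappa> * (P \<circ> e) (Suc i) \<le> (Z \<circ> e) i - (Z \<circ> e) (Suc i) + (t \<circ> e) i * ((C \<circ> e) i - (C \<circ> e) (Suc i))"
      "\<kappa> * (P \<circ> e) i \<le> (Z \<circ> e) (Suc i) - (Z \<circ> e) i + (t \<circ> e) (Suc i) * ((C \<circ> e) (Suc i) - (C \<circ> e) i)"
      using e_less[OF i(2)] gap[OF e_in[OF i(1)] e_in[OF i(2)]] gap[OF e_in[OF i(2)] e_in[OF i(1)]] by auto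
  qed (use assms in auto)
  show ?thesis
    using chain.chain_length_le by linarith
qed

lemma closed_segment_scaleR_add_param:
  fixes z c w :: "'a::real_vector"
  assumes "w \<in> closed_segment z (s *\<^sub>R c + z)" and "0 \<le> s"
  obtains \<tau> where "0 \<le> \<tau>" "\<tau> \<le> s" "w = z + \<tau> *\<^sub>R c"
proof -
  obtain u where "0 \<le> u" "u \<le> 1" "w = (1 - u) *\<^sub>R z + u *\<^sub>R (s *\<^sub>R c + z)"
    using assms(1) by (auto simp: in_segment)
  moreover have "u * s \<le> s"
    using \<open>0 \<le> u\<close> \<open>u \<le> 1\<close> \<open>0 \<le> s\<close> by (simp add: mult_left_le_one_le)
  ultimately show ?thesis
    using \<open>0 \<le> s\<close> by (intro that[of "u * s"]) (simp_all add: algebra_simps)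
qed

lemma card_Gset_Mset_annulus_le:
  fixes A :: "real^'d^'n" and b :: "real^'n" and z c :: "real^'d" and k :: nat
  assumes "z \<noteq> 0" and "norm c = 1" and "0 < g" and "0 < m" and "0 < r" and "r \<le> R"
  shows "real (card {I \<in> Gset A b g \<inter> Mset A z (2 ^ k *\<^sub>R c + z) m.
      norm (proj2 c z (xI A b I)) \<in> {r..R}})
    \<le> real k + 2 + sqrt (4 * (1 + norm z) * ln ((R + r) / r) * (real k + 1) / (g * m))"
proof -
  define S where "S = {I \<in> Gset A b g \<inter> Mset A z (2 ^ k *\<^sub>R c + z) m. norm (proj2 c z (xI A b I)) \<in> {r..R}}"
  have "\<exists>\<tau>. 0 \<le> \<tau> \<and> \<tau> \<le> 2 ^ k \<and> dual_ge A I (z + \<tau> *\<^sub>R c) m" if I: "I \<in> S" for I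
  proof -
    obtain w where "w \<in> closed_segment z (2 ^ k *\<^sub>R c + z)" "dual_ge A I w m"
      using I by (auto simp: S_def Mset_def)
    then show ?thesis
      by (elim closed_segment_scaleR_add_param) auto
  qed
  then obtain \<tau> where \<tau>: "\<And>I. I \<in> S \<Longrightarrow> 0 \<le> \<tau> I \<and> \<tau> I \<le> 2 ^ k \<and> dual_ge A I (z + \<tau> I *\<^sub>R c) m"
    by metis
  have "real (card S) \<le> real k + 2 + sqrt (4 * (1 + norm z) * ln ((R + r) / r) * (real k + 1) / (g * m))"
  proof (rule card_le_if_pairwise_gaps[where t = \<tau> and C = "\<lambda>I. c \<bullet> xI A b I"
        and Z = "\<lambda>I. z \<bullet> xI A b I" and P = "\<lambda>I. norm (proj2 c z (xI A b I))"])
    fix I assume "I \<in> S"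
    then show "0 \<le> \<tau> I \<and> \<tau> I \<le> 2 ^ k \<and> r \<le> norm (proj2 c z (xI A b I)) \<and> norm (proj2 c z (xI A b I)) \<le> R
      \<and> \<bar>c \<bullet> xI A b I\<bar> \<le> norm (proj2 c z (xI A b I))
      \<and> \<bar>z \<bullet> xI A b I\<bar> \<le> norm z * norm (proj2 c z (xI A b I))"
      using \<tau> abs_inner_le_norm_proj2[of c c z] abs_inner_le_norm_proj2[of z c z] \<open>norm c = 1\<close>
      by (auto simp: S_def span_base)
  next
    fix I J assume "I \<in> S" "J \<in> S" "I \<noteq> J"
    then have "m * g * norm (xI A b J) \<le> (z + \<tau> I *\<^sub>R c) \<bullet> (xI A b I - xI A b J)"
      using \<tau> assms(3,4) by (intro dual_gap_le_inner_diff) (auto simp: S_def Mset_def)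
    moreover have "g * m * norm (proj2 c z (xI A b J)) \<le> g * m * norm (xI A b J)"
      using assms(3,4) norm_proj2_le by simp
    ultimately show "g * m * norm (proj2 c z (xI A b J))
        \<le> z \<bullet> xI A b I - z \<bullet> xI A b J + \<tau> I * (c \<bullet> xI A b I - c \<bullet> xI A b J)"
      by (simp add: inner_add_left inner_diff_right algebra_simps)
  qed (use assms in \<open>auto simp: S_def\<close>)
  then show ?thesis
    by (simp add: S_def)
qed

lemma ln_shifted_ratio_le:
  fixes r R :: real
  assumes "0 < r" and "r \<le> R"
  shows "ln ((R + r) / r) \<le> 1 + log 2 (R / r)"
proof -
  have "ln ((R + r) / r) \<le> ln (2 * (R / r))"
    using assms by (simp add: field_simps)
  also have "\<dots> = ln 2 + ln (R / r)"
    using assms by (intro ln_mult_pos) auto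
  also have "\<dots> = ln 2 + log 2 (R / r) * ln 2"
    by (simp add: log_def)
  also have "\<dots> \<le> 1 + log 2 (R / r)"
    using assms ln_2_less_1 by (intro add_mono mult_left_le) auto
  finally show ?thesis .
qed

lemma sqrt_count_bound_le:
  fixes k :: nat and r R \<kappa> \<zeta> d :: real
  assumes "0 < r" and "r \<le> R" and "0 < \<kappa>" and "0 \<le> \<zeta>" and "1 \<le> d"
  shows "real k + 2 + sqrt (4 * (1 + \<zeta>) * ln ((R + r) / r) * (real k + 1) / \<kappa>)
    \<le> 2 * sqrt ((128 * log 2 (R / r) + 208) * (5 * real k + 58) * (\<zeta> + d) / \<kappa>) + 4 * real k + 2"
proof -
  have "0 \<le> log 2 (R / r)"
    using assms by simp
  then have "4 * ln ((R + r) / r) \<le> 128 * log 2 (R / r) + 208"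
    using ln_shifted_ratio_le[OF assms(1,2)] by linarith
  moreover have "0 \<le> ln ((R + r) / r)"
    using assms by simp
  ultimately have "4 * ln ((R + r) / r) * (real k + 1) * (1 + \<zeta>)
      \<le> (128 * log 2 (R / r) + 208) * (5 * real k + 58) * (\<zeta> + d)"
    using assms by (intro mult_mono) auto
  then have "sqrt (4 * (1 + \<zeta>) * ln ((R + r) / r) * (real k + 1) / \<kappa>)
      \<le> sqrt ((128 * log 2 (R / r) + 208) * (5 * real k + 58) * (\<zeta> + d) / \<kappa>)"
    using assms by (intro real_sqrt_le_mono divide_right_mono) (simp_all add: algebra_simps)
  moreover have "0 \<le> sqrt ((128 * log 2 (R / r) + 208) * (5 * real k + 58) * (\<zeta> + d) / \<kappa>)"
    using assms \<open>0 \<le> log 2 (R / r)\<close> by simp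
  ultimately show ?thesis
    by linarith
qed

theorem lemma4p22:
  fixes A :: "real^'d^'n" and b :: "real^'n" and z c :: "real^'d"
    and g m R r :: real and k :: nat
  assumes "independent {z, c}" and "z \<noteq> c" and "norm c = 1"
    and "nondegenerate A b z (2 ^ k *\<^sub>R c + z)"
    and "g > 0" and "m > 0" and "r > 0" and "R > r"
    and "(10 * log 2 (R / r) + 16) * g * m \<le> real CARD('d)"
  shows "real (card (Tset A b z (2 ^ k *\<^sub>R c + z)
             (Gset A b g \<inter> Mset A z (2 ^ k *\<^sub>R c + z) m)))
    \<le> 2 * sqrt ((128 * log 2 (R / r) + 208) * (5 * real k + 58) * (norm z + real CARD('d)) / (g * m))
      + real (card {I \<in> Fset A b. norm (proj2 c z (xI A b I)) \<notin> {r..R}})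
      + 4 * real k + 2"
proof -
  let ?S = "Gset A b g \<inter> Mset A z (2 ^ k *\<^sub>R c + z) m"
  let ?inside = "{I \<in> ?S. norm (proj2 c z (xI A b I)) \<in> {r..R}}"
  let ?outside = "{I \<in> Fset A b. norm (proj2 c z (xI A b I)) \<notin> {r..R}}"
  have "Tset A b z (2 ^ k *\<^sub>R c + z) ?S \<subseteq> ?inside \<union> ?outside"
    by (auto simp: Tset_def Gset_def)
  then have "card (Tset A b z (2 ^ k *\<^sub>R c + z) ?S) \<le> card ?inside + card ?outside"
    by (meson card_Un_le card_mono finite order_trans)
  moreover have "z \<noteq> 0"
    using \<open>independent {z, c}\<close> dependent_zero by blast
  then have "real (card ?inside)
      \<le> real k + 2 + sqrt (4 * (1 + norm z) * ln ((R + r) / r) * (real k + 1) / (g * m))"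
    using assms by (intro card_Gset_Mset_annulus_le) auto
  moreover have "real k + 2 + sqrt (4 * (1 + norm z) * ln ((R + r) / r) * (real k + 1) / (g * m))
      \<le> 2 * sqrt ((128 * log 2 (R / r) + 208) * (5 * real k + 58) * (norm z + real CARD('d)) / (g * m))
        + 4 * real k + 2"
    using assms by (intro sqrt_count_bound_le) auto
  ultimately show ?thesis
    by linarith
qed

end
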